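(* Let $n\geqslant 3$ and $m\geqslant 1$ be integers, let $I_m=(i_1,\ldots,i_m)$ be a vector of $m$ pairwise different elements of $\{1,\ldots,n\}$, and let $P_m=((j_1,k_1),\ldots,(j_m,k_m))$ be a vector of $m$ pairs formed by $2m$ pairwise different elements of $\{2,\ldots,n\}$. Then the function $f_{I_m}^{P_m}$ is an eigenfunction of the Star graph $S_n$ with eigenvalue $n-m-1$.
   Context: Write a permutation $\pi$ of $\{1,\ldots,n\}$ as the sequence $[\pi_1\pi_2\ldots\pi_n]$. The Star graph $S_n$ has vertex set $\mathrm{Sym}_n$, and two permutations are adjacent iff one is obtained from the other by exchanging the entries in positions $1$ and $i$ for some $2\leqslant i\leqslant n$ (this is the Cayley graph of $\mathrm{Sym}_n$ generated by the transpositions $(1\ i)$, $2\le i\le n$). For a graph $\Gamma$, a function $f:V(\Gamma)\to\mathbb{R}$ is an eigenfunction with eigenvalue $\theta$ if $f\not\equiv 0$ and $\theta f(x)=\sum_{y\in N(x)}f(y)$ for every vertex $x$, where $N(x)$ is the neighbourhood of $x$. The function $f_{I_m}^{P_m}:\mathrm{Sym}_n\to\mathbb{R}$ is defined as follows: $f_{I_m}^{P_m}(\pi)=0$ if there is $t\in\{1,\ldots,m\}$ with $\pi_{j_t}\ne i_t$ and $\pi_{k_t}\ne i_t$; otherwise, for each $t$ exactly one of $\pi_{j_t}=i_t$, $\pi_{k_t}=i_t$ holds, and setting $x_t=1$ if $\pi_{j_t}=i_t$ and $x_t=0$ if $\pi_{k_t}=i_t$, one puts $f_{I_m}^{P_m}(\pi)=1$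 if $(x_1,\ldots,x_m)$ contains an even number of $1$s and $f_{I_m}^{P_m}(\pi)=-1$ if it contains an odd number of $1$s. *)

theory Defs
  imports "HOL-Combinatorics.Combinatorics"
begin

text \<open>Permutations of {1..n} are functions nat => nat permuting {1..n};
  the entry in position p of pi is pi p.\<close>

definition star_vertices :: "nat \<Rightarrow> (nat \<Rightarrow> nat) set" where
  "star_vertices n = {\<pi>. \<pi> permutes {1..n}}"

definition star_neighbours :: "nat \<Rightarrow> (nat \<Rightarrow> nat) \<Rightarrow> (nat \<Rightarrow> nat) set" where
  "star_neighbours n \<pi> = {\<pi> \<circ> transpose 1 i | i. 2 \<le> i \<and> i \<le> n}"

definition is_eigenfunction ::
  "'v set \<Rightarrow> ('v \<Rightarrow> 'v set) \<Rightarrow> ('v \<Rightarrow> real) \<Rightarrow> real \<Rightarrow> bool" where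
  "is_eigenfunction V N f \<theta> \<longleftrightarrow>
     (\<exists>x\<in>V. f x \<noteq> 0) \<and> (\<forall>x\<in>V. \<theta> * f x = (\<Sum>y\<in>N x. f y))"

text \<open>f_{I_m}^{P_m}: I t = i_t, J t = j_t, K t = k_t for t in {1..m}.\<close>
definition f_IP :: "nat \<Rightarrow> (nat \<Rightarrow> nat) \<Rightarrow> (nat \<Rightarrow> nat) \<Rightarrow> (nat \<Rightarrow> nat)
    \<Rightarrow> (nat \<Rightarrow> nat) \<Rightarrow> real" where
  "f_IP m I J K \<pi> =
     (if \<exists>t\<in>{1..m}. \<pi> (J t) \<noteq> I t \<and> \<pi> (K t) \<noteq> I t then 0
      else (-1) ^ card {t\<in>{1..m}. \<pi> (J t) = I t})"

end

theory Submission
  imports Defs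
begin

text \<open>The value of \<open>f\<close> at \<pi> is the product over \<open>t\<close> of a local factor that is
  \<open>-1\<close>, \<open>1\<close> or \<open>0\<close> according as \<open>i\<^sub>t\<close> sits in position \<open>j\<^sub>t\<close>, in position \<open>k\<^sub>t\<close>, or in
  neither. The neighbour \<open>\<pi> \<circ> (1 i)\<close> only changes entries in positions \<open>1\<close> and \<open>i\<close>, and
  position \<open>1\<close> is not among the \<open>j\<^sub>t, k\<^sub>t\<close>. So the \<open>n - 1 - 2m\<close> neighbours with \<open>i\<close> outside
  all pairs have the same value as \<pi>, while for each pair the \<open>t\<close>-th local factors of the
  two neighbours \<open>\<pi> \<circ> (1 j\<^sub>t)\<close> and \<open>\<pi> \<circ> (1 k\<^sub>t)\<close> add up to that of \<pi>, the other factors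
  being unchanged. Summing gives \<open>(n - 1 - 2m + m) f(\<pi>)\<close>. Finally \<open>f\<close> does not vanish at
  any permutation moving every \<open>i\<^sub>t\<close> to position \<open>j\<^sub>t\<close>.\<close>

lemma prod_ternary_sign:
  assumes "finite A"
  shows "(\<Prod>t\<in>A. if P t then -1 else if Q t then 1 else (0::real))
     = (if \<exists>t\<in>A. \<not> P t \<and> \<not> Q t then 0 else (-1) ^ card {t\<in>A. P t})"
  using assms
proof (induction A rule: finite_induct)
  case empty
  then show ?case by simp
next
  case (insert x A)
  have "{t\<in>insert x A. P t} = (if P x then insert x {t\<in>A. P t} else {t\<in>A. P t})"
    by auto
  then have "card {t\<in>insert x A. P t} = (if P x then Suc (card {t\<in>A. P t}) else card {t\<in>A. P t})"
    using insert(1,2) by simp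
  then show ?case using insert by simp
qed

lemma permutes_extending_inj_on:
  assumes "finite S" "inj_on h A" "A \<subseteq> S" "h ` A \<subseteq> S"
  shows "\<exists>\<pi>. \<pi> permutes S \<and> (\<forall>x\<in>A. \<pi> x = h x)"
proof -
  have "finite A" using assms(1,3) by (rule finite_subset[rotated])
  then have "card (S - A) = card (S - h ` A)"
    using assms by (simp add: card_Diff_subset card_image finite_subset)
  then obtain g where g: "bij_betw g (S - A) (S - h ` A)"
    using assms(1) finite_same_card_bij by blast
  define \<pi> where "\<pi> x = (if x \<in> A then h x else if x \<in> S then g x else x)" for x
  have "bij_betw \<pi> A (h ` A)"
    using assms(2) by (auto simp: bij_betw_def inj_on_def \<pi>_def)
  moreover have "bij_betw \<pi> (S - A) (S - h ` A)"
    using g by (rule bij_betw_cong[THEN iffD1, rotated]) (simp add: \<pi>_def)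
  ultimately have "bij_betw \<pi> (A \<union> (S - A)) (h ` A \<union> (S - h ` A))"
    by (rule bij_betw_combine) blast
  then have "bij_betw \<pi> S S"
    using assms(3,4) by (simp add: Un_absorb1)
  then have "\<pi> permutes S"
    by (rule bij_imp_permutes) (use assms(3) in \<open>auto simp: \<pi>_def\<close>)
  then show ?thesis by (auto simp: \<pi>_def)
qed

definition f_IP_factor ::
  "(nat \<Rightarrow> nat) \<Rightarrow> (nat \<Rightarrow> nat) \<Rightarrow> (nat \<Rightarrow> nat) \<Rightarrow> (nat \<Rightarrow> nat) \<Rightarrow> nat \<Rightarrow> real" where
  "f_IP_factor I J K \<pi> t = (if \<pi> (J t) = I t then -1 else if \<pi> (K t) = I t then 1 else 0)"

lemma f_IP_eq_prod_factor: "f_IP m I J K \<pi> = (\<Prod>t\<in>{1..m}. f_IP_factor I J K \<pi> t)"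
  unfolding f_IP_def f_IP_factor_def by (subst prod_ternary_sign) auto

lemma f_IP_eq_neg_one_power:
  assumes "\<forall>t\<in>{1..m}. \<pi> (J t) = I t"
  shows "f_IP m I J K \<pi> = (-1) ^ m"
proof -
  have "{t\<in>{1..m}. \<pi> (J t) = I t} = {1..m}" using assms by auto
  then show ?thesis using assms by (simp add: f_IP_def)
qed

lemma f_IP_factor_transpose_fresh:
  assumes "i \<noteq> J t" "i \<noteq> K t" "J t \<noteq> 1" "K t \<noteq> 1"
  shows "f_IP_factor I J K (\<pi> \<circ> transpose 1 i) t = f_IP_factor I J K \<pi> t"
  using assms by (simp add: f_IP_factor_def transpose_def)

lemma f_IP_factor_transpose_pair:
  assumes "inj \<pi>" "J t \<noteq> K t" "J t \<noteq> 1" "K t \<noteq> 1"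
  shows "f_IP_factor I J K (\<pi> \<circ> transpose 1 (J t)) t + f_IP_factor I J K (\<pi> \<circ> transpose 1 (K t)) t
       = f_IP_factor I J K \<pi> t"
proof -
  have "\<pi> 1 \<noteq> \<pi> (J t)" "\<pi> 1 \<noteq> \<pi> (K t)" "\<pi> (J t) \<noteq> \<pi> (K t)"
    using assms by (simp_all add: inj_eq)
  then show ?thesis
    using assms(2-4) by (auto simp: f_IP_factor_def transpose_def)
qed

lemma f_IP_transpose_fresh:
  assumes "1 \<notin> J ` {1..m} \<union> K ` {1..m}" "i \<notin> J ` {1..m} \<union> K ` {1..m}"
  shows "f_IP m I J K (\<pi> \<circ> transpose 1 i) = f_IP m I J K \<pi>"
  unfolding f_IP_eq_prod_factor
  by (rule prod.cong[OF refl], rule f_IP_factor_transpose_fresh) (use assms in force)+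

lemma f_IP_transpose_pair:
  assumes "inj \<pi>" "t \<in> {1..m}" "1 \<notin> J ` {1..m} \<union> K ` {1..m}"
    and "inj_on J {1..m}" "inj_on K {1..m}" "J ` {1..m} \<inter> K ` {1..m} = {}"
  shows "f_IP m I J K (\<pi> \<circ> transpose 1 (J t)) + f_IP m I J K (\<pi> \<circ> transpose 1 (K t))
       = f_IP m I J K \<pi>"
proof -
  let ?g = "f_IP_factor I J K"
  have disj: "J a \<noteq> K b" if "a \<in> {1..m}" "b \<in> {1..m}" for a b
    using assms(6) that by blast
  have others: "(\<Prod>s\<in>{1..m} - {t}. ?g (\<pi> \<circ> transpose 1 i) s) = (\<Prod>s\<in>{1..m} - {t}. ?g \<pi> s)"
    if "i = J t \<or> i = K t" for i
  proof (rule prod.cong[OF refl], rule f_IP_factor_transpose_fresh)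
    fix s assume s: "s \<in> {1..m} - {t}"
    show "i \<noteq> J s" "i \<noteq> K s"
      using that s assms(2) disj[of s t] disj[of t s]
        inj_on_eq_iff[OF assms(4)] inj_on_eq_iff[OF assms(5)] by auto
    show "J s \<noteq> 1" "K s \<noteq> 1" using s assms(3) by force+
  qed
  have split: "f_IP m I J K \<sigma> = ?g \<sigma> t * (\<Prod>s\<in>{1..m} - {t}. ?g \<sigma> s)" for \<sigma>
    unfolding f_IP_eq_prod_factor using assms(2) by (simp add: prod.remove)
  have "?g (\<pi> \<circ> transpose 1 (J t)) t + ?g (\<pi> \<circ> transpose 1 (K t)) t = ?g \<pi> t"
    by (rule f_IP_factor_transpose_pair[where J = J and K = K and t = t,
          OF assms(1) disj[OF assms(2,2)]])
      (use assms(2,3) in force)+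
  then show ?thesis
    unfolding split others[OF disjI1[OF refl]] others[OF disjI2[OF refl]]
    by (simp flip: distrib_right)
qed

lemma sum_star_neighbours:
  assumes "inj \<pi>"
  shows "(\<Sum>y\<in>star_neighbours n \<pi>. F y) = (\<Sum>i\<in>{2..n}. F (\<pi> \<circ> transpose 1 i))"
proof -
  have "star_neighbours n \<pi> = (\<lambda>i. \<pi> \<circ> transpose 1 i) ` {2..n}"
    by (auto simp: star_neighbours_def)
  moreover have "inj_on (\<lambda>i. \<pi> \<circ> transpose 1 i) {2..n}"
  proof (rule inj_onI)
    fix i j assume "i \<in> {2..n}" "j \<in> {2..n}" "\<pi> \<circ> transpose 1 i = \<pi> \<circ> transpose 1 j"
    then have "\<pi> i = \<pi> j" by (metis comp_apply transpose_apply_first)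
    then show "i = j" using assms by (simp add: inj_eq)
  qed
  ultimately show ?thesis by (simp add: sum.reindex)
qed

lemma f_IP_transpose_sum:
  assumes "n \<ge> 1" "inj \<pi>" "inj_on J {1..m}" "inj_on K {1..m}"
    and "J ` {1..m} \<inter> K ` {1..m} = {}" "J ` {1..m} \<union> K ` {1..m} \<subseteq> {2..n}"
  shows "(\<Sum>i\<in>{2..n}. f_IP m I J K (\<pi> \<circ> transpose 1 i)) = (real n - real m - 1) * f_IP m I J K \<pi>"
proof -
  let ?F = "\<lambda>i. f_IP m I J K (\<pi> \<circ> transpose 1 i)"
  define P where "P = J ` {1..m} \<union> K ` {1..m}"
  have not1: "1 \<notin> P" using assms(6) P_def by auto
  have cardP: "card P = 2 * m"
    using assms(3-5) by (simp add: P_def card_Un_disjoint card_image)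
  then have "2 * m + 1 \<le> n"
    using card_mono[OF _ assms(6)] P_def assms(1) by simp
  then have card_rest: "real (card ({2..n} - P)) = real n - 1 - 2 * real m"
    using assms(6) cardP by (simp add: P_def card_Diff_subset finite_subset)
  have "(\<Sum>i\<in>{2..n}. ?F i) = (\<Sum>i\<in>{2..n} - P. ?F i) + (\<Sum>i\<in>P. ?F i)"
    using assms(6) P_def by (simp add: sum.subset_diff)
  also have "(\<Sum>i\<in>{2..n} - P. ?F i) = real (card ({2..n} - P)) * f_IP m I J K \<pi>"
    using f_IP_transpose_fresh[OF not1[unfolded P_def]] by (simp add: P_def)
  also have "(\<Sum>i\<in>P. ?F i) = (\<Sum>t\<in>{1..m}. ?F (J t)) + (\<Sum>t\<in>{1..m}. ?F (K t))"
    using assms(3-5) by (simp add: P_def sum.union_disjoint sum.reindex)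
  also have "\<dots> = real m * f_IP m I J K \<pi>"
    using f_IP_transpose_pair[OF assms(2) _ not1[unfolded P_def] assms(3-5)]
    by (simp flip: sum.distrib)
  also have "real (card ({2..n} - P)) * f_IP m I J K \<pi> + real m * f_IP m I J K \<pi>
           = (real n - real m - 1) * f_IP m I J K \<pi>"
    by (simp add: card_rest algebra_simps)
  finally show ?thesis .
qed

theorem proposition1:
  fixes n m :: nat and I J K :: "nat \<Rightarrow> nat"
  assumes "n \<ge> 3" and "m \<ge> 1"
    and "\<forall>t\<in>{1..m}. I t \<in> {1..n}"
    and "inj_on I {1..m}"
    and "\<forall>t\<in>{1..m}. J t \<in> {2..n} \<and> K t \<in> {2..n}"
    and "inj_on J {1..m}" and "inj_on K {1..m}"
    and "J ` {1..m} \<inter> K ` {1..m} = {}"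
  shows "is_eigenfunction (star_vertices n) (star_neighbours n) (f_IP m I J K)
           (real n - real m - 1)"
proof -
  have "inj_on (I \<circ> the_inv_into {1..m} J) (J ` {1..m})"
    using assms(4,6) by (auto intro: comp_inj_on inj_on_the_inv_into)
  then obtain \<pi> where \<pi>: "\<pi> permutes {1..n}" "\<forall>t\<in>{1..m}. \<pi> (J t) = I t"
    using permutes_extending_inj_on[of "{1..n}" _ "J ` {1..m}"] assms(3,5,6)
    by (force simp: the_inv_into_f_f)
  then have "f_IP m I J K \<pi> \<noteq> 0" by (simp add: f_IP_eq_neg_one_power)
  moreover have "(real n - real m - 1) * f_IP m I J K \<sigma> = (\<Sum>y\<in>star_neighbours n \<sigma>. f_IP m I J K y)"
    if "\<sigma> permutes {1..n}" for \<sigma>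
  proof -
    have "J ` {1..m} \<union> K ` {1..m} \<subseteq> {2..n}" using assms(5) by auto
    moreover have "n \<ge> 1" using assms(1) by simp
    ultimately show ?thesis
      using f_IP_transpose_sum[OF _ permutes_inj[OF that] assms(6-8)]
      by (simp add: sum_star_neighbours[OF permutes_inj[OF that]])
  qed
  ultimately show ?thesis
    using \<pi>(1) by (auto simp: is_eigenfunction_def star_vertices_def)
qed

end
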